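(* Let $n\ge 1$ users have valuations drawn i.i.d. from a distribution on $[0,1]$ with pdf $\rho$, and let $c_\rho=\int_0^1\rho^2(t)\,dt$. For a parameter $h\ge 0$ consider the mechanism $\tilde M=(\mathbf a,\tilde{\mathbf p},\tilde r)$ defined for bid vectors $\mathbf b=(b_1,\dots,b_n)\in[0,1]^n$ by \[ a_i(\mathbf b)=\frac{e^{b_i}}{\sum_{j=1}^n e^{b_j}}, \] \[ \tilde p_i(\mathbf b)=b_i-\frac{\sum_{j=1}^n e^{b_j}}{e^{b_i}}\left(\ln\frac{\sum_{j=1}^n e^{b_j}}{1+\sum_{j\ne i}e^{b_j}}+\frac12 h b_i^2\left(\frac{\sum_{j\ne i}b_j^2}{c_\rho(n-1)}-1\right)\right), \] \[ \tilde r(\mathbf b)=\frac12 h\left(\sum_{i=1}^n b_i^2-\frac{\sum_{1\le i<j\le n}b_i^2b_j^2}{c_\rho(n-1)}\right) \] (this is the soft second-price mechanism with $m=1$, perturbed with parameter $h$). Then there exists $h_*=h_*(n,c_\rho)>0$ such that for every $h\in[0,h_*]$ the mechanism $\tilde M$ is user individually rational and budget feasible, and, as $n\to+\infty$, $h_*(n,c_\rho)=\Omega(c_\rho/n)$.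
   Context: A transaction fee mechanism (TFM) for $n$ users is a triple $(\mathbf a,\mathbf p,r)$: $\mathbf a:[0,1]^n\to[0,1]^n$ gives each user's confirmation probability, $\mathbf p:[0,1]^n\to\mathbb R^n$ gives each user's payment if confirmed, and $r:[0,1]^n\to\mathbb R$ gives the miner's revenue. User individual rationality (UIR): for all $i$ and all bid vectors $\mathbf b$ with $b_i$ equal to the user's bid, $a_i(\mathbf b)>0\implies p_i(\mathbf b)\le b_i$. Budget feasibility (BF): for all $\mathbf b$, $\sum_{i=1}^n a_i(\mathbf b)p_i(\mathbf b)\ge r(\mathbf b)$. *)

theory Defs
  imports "HOL-Analysis.Analysis" "HOL-Library.Landau_Symbols"
begin

text \<open>Bid vectors for n users are functions nat => real; only indices i < n matter.
  A bid vector is admissible if every bid lies in [0,1].\<close>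
definition bids :: "nat \<Rightarrow> (nat \<Rightarrow> real) set" where
  "bids n = {b. \<forall>i<n. b i \<in> {0..1}}"

definition UIR :: "nat \<Rightarrow> (nat \<Rightarrow> (nat \<Rightarrow> real) \<Rightarrow> real) \<Rightarrow> (nat \<Rightarrow> (nat \<Rightarrow> real) \<Rightarrow> real) \<Rightarrow> bool" where
  "UIR n a p \<longleftrightarrow> (\<forall>b\<in>bids n. \<forall>i<n. a i b > 0 \<longrightarrow> p i b \<le> b i)"

definition BF :: "nat \<Rightarrow> (nat \<Rightarrow> (nat \<Rightarrow> real) \<Rightarrow> real) \<Rightarrow> (nat \<Rightarrow> (nat \<Rightarrow> real) \<Rightarrow> real)
                   \<Rightarrow> ((nat \<Rightarrow> real) \<Rightarrow> real) \<Rightarrow> bool" where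
  "BF n a p r \<longleftrightarrow> (\<forall>b\<in>bids n. (\<Sum>i<n. a i b * p i b) \<ge> r b)"

definition pdf01 :: "(real \<Rightarrow> real) \<Rightarrow> bool" where
  "pdf01 \<rho> \<longleftrightarrow> (\<forall>t\<in>{0..1}. \<rho> t \<ge> 0) \<and> \<rho> integrable_on {0..1} \<and> integral {0..1} \<rho> = 1"

definition c_rho :: "(real \<Rightarrow> real) \<Rightarrow> real" where
  "c_rho \<rho> = integral {0..1} (\<lambda>t. (\<rho> t)\<^sup>2)"

definition alloc :: "nat \<Rightarrow> nat \<Rightarrow> (nat \<Rightarrow> real) \<Rightarrow> real" where
  "alloc n i b = exp (b i) / (\<Sum>j<n. exp (b j))"

definition pay :: "nat \<Rightarrow> real \<Rightarrow> real \<Rightarrow> nat \<Rightarrow> (nat \<Rightarrow> real) \<Rightarrow> real" where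
  "pay n c h i b = b i - (\<Sum>j<n. exp (b j)) / exp (b i) *
     ( ln ((\<Sum>j<n. exp (b j)) / (1 + (\<Sum>j\<in>{..<n}-{i}. exp (b j))))
       + 1/2 * h * (b i)\<^sup>2 * ((\<Sum>j\<in>{..<n}-{i}. (b j)\<^sup>2) / (c * real (n - 1)) - 1))"

definition revenue :: "nat \<Rightarrow> real \<Rightarrow> real \<Rightarrow> (nat \<Rightarrow> real) \<Rightarrow> real" where
  "revenue n c h b = 1/2 * h * ((\<Sum>i<n. (b i)\<^sup>2)
     - (\<Sum>(i,j)\<in>{(i,j). i < j \<and> j < n}. (b i)\<^sup>2 * (b j)\<^sup>2) / (c * real (n - 1)))"

end

theory Submission
  imports Defs
begin

text \<open>Write \<open>x = b i\<close>, \<open>T = \<Sum>j\<noteq>i. exp (b j)\<close> and \<open>q = (\<Sum>j\<noteq>i. (b j)\<^sup>2) / (c (n - 1))\<close>, so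
  \<open>q \<le> 1/c\<close>. Then \<open>a\<^sub>i p\<^sub>i = x e\<^sup>x / (e\<^sup>x + T) - ln ((e\<^sup>x + T) / (1 + T)) - h/2 x\<^sup>2 (q - 1)\<close>.
  For UIR, \<open>ln ((e\<^sup>x + T) / (1 + T)) \<ge> x / (e + T)\<close> dominates the \<open>h/2 x\<^sup>2\<close> that the perturbation
  can subtract as soon as \<open>h \<le> 1/(e n)\<close>. For BF, the revenue is at most \<open>\<Sum>i. h/2 (b i)\<^sup>2\<close>,
  so it suffices that the unperturbed soft payment dominates \<open>h q/2 x\<^sup>2\<close>. The function
  \<open>x e\<^sup>x / (e\<^sup>x + T) - ln ((e\<^sup>x + T) / (1 + T)) - k/2 x\<^sup>2\<close> vanishes at 0 and has derivative
  \<open>x (e\<^sup>x T / (e\<^sup>x + T)\<^sup>2 - k)\<close>, which is nonnegative on [0,1] when \<open>k \<le> T / (e + T)\<^sup>2\<close>; since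
  \<open>T / (e + T)\<^sup>2 \<ge> (n - 1) / (e n)\<^sup>2\<close>, any \<open>h\<close> of order \<open>c / n\<close> is admissible.\<close>

lemma soft_payment_ge_quadratic:
  fixes T k x :: real
  assumes T: "0 \<le> T" and x: "0 \<le> x" "x \<le> 1"
    and k: "0 \<le> k" "k \<le> T / (exp 1 + T)\<^sup>2"
  shows "k / 2 * x\<^sup>2 \<le> x * exp x / (exp x + T) - ln ((exp x + T) / (1 + T))"
proof -
  define g where "g y = y * exp y / (exp y + T) - ln (exp y + T) + ln (1 + T) - k / 2 * y\<^sup>2" for y
  have denom_pos: "0 < exp y + T" for y :: real
    using T by (simp add: add_pos_nonneg)
  have g_deriv: "(g has_real_derivative y * (exp y * T / (exp y + T)\<^sup>2 - k)) (at y)" for y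
  proof -
    have "(g has_real_derivative
        ((exp y + y * exp y) * (exp y + T) - y * exp y * exp y) / (exp y + T)\<^sup>2
        - exp y / (exp y + T) - k * y) (at y)"
      unfolding g_def using denom_pos[of y]
      by (auto intro!: derivative_eq_intros simp: power2_eq_square)
    moreover have "((exp y + y * exp y) * (exp y + T) - y * exp y * exp y) / (exp y + T)\<^sup>2
        - exp y / (exp y + T) - k * y = y * (exp y * T / (exp y + T)\<^sup>2 - k)"
      using denom_pos[of y] by (simp add: divide_simps power2_eq_square) (simp add: algebra_simps)
    ultimately show ?thesis by simp
  qed
  have "g 0 \<le> g x"
  proof (rule DERIV_nonneg_imp_nondecreasing[OF x(1)])
    fix y assume y: "0 \<le> y" "y \<le> x"
    have "T / (exp 1 + T)\<^sup>2 \<le> exp y * T / (exp y + T)\<^sup>2"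
    proof (rule frac_le)
      show "T \<le> exp y * T" using T y by (simp add: mult_le_cancel_right1)
      show "(exp y + T)\<^sup>2 \<le> (exp 1 + T)\<^sup>2"
        using y x denom_pos[of y] by (intro power_mono) auto
    qed (use T denom_pos[of y] in auto)
    then show "\<exists>d. (g has_real_derivative d) (at y) \<and> 0 \<le> d"
      using g_deriv[of y] y k by (intro exI[of _ "y * (exp y * T / (exp y + T)\<^sup>2 - k)"]) auto
  qed
  moreover have "ln ((exp x + T) / (1 + T)) = ln (exp x + T) - ln (1 + T)"
    using denom_pos[of x] T by (simp add: ln_div)
  ultimately show ?thesis by (simp add: g_def add.commute)
qed

lemma ln_ratio_ge_linear:
  fixes T x :: real
  assumes T: "0 \<le> T" and x: "0 \<le> x" "x \<le> 1"
  shows "x / (exp 1 + T) \<le> ln ((exp x + T) / (1 + T))"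
proof -
  have pos: "0 < exp x + T" "0 < 1 + T" "0 < exp 1 + T" using T by (auto simp: add_pos_nonneg)
  have "x / (exp 1 + T) \<le> x / (exp x + T)"
    using pos x by (intro divide_left_mono) auto
  also have "\<dots> \<le> (exp x - 1) / (exp x + T)"
    using pos exp_ge_add_one_self[of x] by (intro divide_right_mono) linarith+
  also have "\<dots> = 1 - (1 + T) / (exp x + T)"
    using pos by (simp add: field_simps)
  also have "\<dots> \<le> - ln ((1 + T) / (exp x + T))"
    using ln_le_minus_one[of "(1 + T) / (exp x + T)"] pos by simp
  also have "\<dots> = ln ((exp x + T) / (1 + T))"
    using pos by (simp add: ln_div)
  finally show ?thesis .
qed

lemma soft_price_margin_nonneg:
  fixes T x h q :: real
  assumes T: "0 \<le> T" and x: "0 \<le> x" "x \<le> 1"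
    and h: "0 \<le> h" "h \<le> 1 / (exp 1 + T)" and q: "0 \<le> q"
  shows "0 \<le> ln ((exp x + T) / (1 + T)) + 1/2 * h * x\<^sup>2 * (q - 1)"
proof -
  have "x\<^sup>2 \<le> 2 * x"
    using x mult_left_le[of x x] by (simp add: power2_eq_square)
  then have "h / 2 * x\<^sup>2 \<le> h / 2 * (2 * x)"
    using h by (intro mult_left_mono) auto
  also have "\<dots> = h * x" by simp
  also have "\<dots> \<le> x / (exp 1 + T)"
    using mult_right_mono[OF h(2) x(1)] by simp
  also have "\<dots> \<le> ln ((exp x + T) / (1 + T))"
    by (rule ln_ratio_ge_linear[OF T x])
  finally have "h / 2 * x\<^sup>2 \<le> ln ((exp x + T) / (1 + T))" .
  moreover have "0 \<le> h / 2 * x\<^sup>2 * q" using h q by simp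
  ultimately show ?thesis by (simp add: right_diff_distrib)
qed

lemma alloc_pay_split:
  fixes b :: "nat \<Rightarrow> real" and c h :: real
  assumes i: "i < n"
  defines "T \<equiv> \<Sum>j\<in>{..<n}-{i}. exp (b j)"
    and "q \<equiv> (\<Sum>j\<in>{..<n}-{i}. (b j)\<^sup>2) / (c * real (n - 1))"
  shows "alloc n i b = exp (b i) / (exp (b i) + T)"
    and "pay n c h i b = b i - (exp (b i) + T) / exp (b i) *
           (ln ((exp (b i) + T) / (1 + T)) + 1/2 * h * (b i)\<^sup>2 * (q - 1))"
proof -
  have "(\<Sum>j<n. exp (b j)) = exp (b i) + T"
    unfolding T_def using i by (simp add: sum.remove)
  then show "alloc n i b = exp (b i) / (exp (b i) + T)"
    and "pay n c h i b = b i - (exp (b i) + T) / exp (b i) *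
           (ln ((exp (b i) + T) / (1 + T)) + 1/2 * h * (b i)\<^sup>2 * (q - 1))"
    unfolding alloc_def pay_def q_def T_def[symmetric] by simp_all
qed

lemma sum_others_bounds:
  fixes f :: "nat \<Rightarrow> real"
  assumes i: "i < n" and f: "\<And>j. j < n \<Longrightarrow> lo \<le> f j \<and> f j \<le> hi"
  shows "real (n - 1) * lo \<le> (\<Sum>j\<in>{..<n}-{i}. f j)"
    and "(\<Sum>j\<in>{..<n}-{i}. f j) \<le> real (n - 1) * hi"
proof -
  have card: "card ({..<n}-{i}) = n - 1" using i by simp
  show "real (n - 1) * lo \<le> (\<Sum>j\<in>{..<n}-{i}. f j)"
    using sum_bounded_below[of "{..<n}-{i}" lo f] f card by auto
  show "(\<Sum>j\<in>{..<n}-{i}. f j) \<le> real (n - 1) * hi"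
    using sum_bounded_above[of "{..<n}-{i}" f hi] f card by auto
qed

lemma bids_others_bounds:
  assumes b: "b \<in> bids n" and i: "i < n"
  shows "real (n - 1) \<le> (\<Sum>j\<in>{..<n}-{i}. exp (b j))"
    and "(\<Sum>j\<in>{..<n}-{i}. exp (b j)) \<le> real (n - 1) * exp 1"
    and "0 \<le> (\<Sum>j\<in>{..<n}-{i}. (b j)\<^sup>2)"
    and "(\<Sum>j\<in>{..<n}-{i}. (b j)\<^sup>2) \<le> real (n - 1)"
    and "0 \<le> b i" and "b i \<le> 1"
proof -
  have bj: "0 \<le> b j \<and> b j \<le> 1" if "j < n" for j
    using b that by (auto simp: bids_def)
  show "real (n - 1) \<le> (\<Sum>j\<in>{..<n}-{i}. exp (b j))"
    and "(\<Sum>j\<in>{..<n}-{i}. exp (b j)) \<le> real (n - 1) * exp 1"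
    using sum_others_bounds[OF i, where f = "\<lambda>j. exp (b j)" and lo = 1 and hi = "exp 1"] bj by auto
  show "0 \<le> (\<Sum>j\<in>{..<n}-{i}. (b j)\<^sup>2)"
    and "(\<Sum>j\<in>{..<n}-{i}. (b j)\<^sup>2) \<le> real (n - 1)"
    using sum_others_bounds[OF i, where f = "\<lambda>j. (b j)\<^sup>2" and lo = 0 and hi = 1] bj by (auto simp: power_le_one)
  show "0 \<le> b i" and "b i \<le> 1" using bj[OF i] by auto
qed

lemma revenue_le_quadratic:
  assumes c: "0 \<le> c" and h: "0 \<le> h"
  shows "revenue n c h b \<le> (\<Sum>i<n. h / 2 * (b i)\<^sup>2)"
proof -
  have "0 \<le> (\<Sum>(i, j)\<in>{(i, j). i < j \<and> j < n}. (b i)\<^sup>2 * (b j)\<^sup>2) / (c * real (n - 1))"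
    using c by (intro divide_nonneg_nonneg sum_nonneg) auto
  then have "revenue n c h b \<le> 1/2 * h * (\<Sum>i<n. (b i)\<^sup>2)"
    unfolding revenue_def using h by (intro mult_left_mono) auto
  also have "\<dots> = (\<Sum>i<n. h / 2 * (b i)\<^sup>2)"
    by (simp add: sum_distrib_left)
  finally show ?thesis .
qed

text \<open>A density has \<open>c_rho \<rho> \<ge> 1\<close> by Cauchy--Schwarz, but only \<open>0 \<le> c_rho \<rho>\<close> is used: the case
  split keeps the bound positive when \<open>c = 0\<close>, where the quadratic term of \<open>pay\<close> vanishes
  because division by zero yields zero.\<close>
definition perturbation_bound :: "nat \<Rightarrow> real \<Rightarrow> real" where
  "perturbation_bound n c = (if 0 < c then min 1 c else 1) / (2 * (exp 1)\<^sup>2 * real n)"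

lemma perturbation_bound_pos: "0 < n \<Longrightarrow> 0 < perturbation_bound n c"
  unfolding perturbation_bound_def by (auto intro!: divide_pos_pos)

lemma perturbation_bound_le_inverse: "perturbation_bound n c \<le> 1 / (exp 1 * real n)"
proof -
  have e1: "1 \<le> exp (1::real)" by simp
  have "exp 1 \<le> 2 * (exp 1 :: real)\<^sup>2"
    using mult_left_mono[OF e1, of "exp 1"] e1 unfolding power2_eq_square by linarith
  then have "exp 1 * real n \<le> 2 * (exp 1)\<^sup>2 * real n"
    by (rule mult_right_mono) simp
  then have "1 / (2 * (exp 1)\<^sup>2 * real n) \<le> 1 / (exp 1 * real n)"
    by (cases "n = 0") (auto intro!: divide_left_mono)
  moreover have "perturbation_bound n c \<le> 1 / (2 * (exp 1)\<^sup>2 * real n)"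
    unfolding perturbation_bound_def by (intro divide_right_mono) auto
  ultimately show ?thesis by linarith
qed

lemma perturbation_bound_le_scaled: "0 < c \<Longrightarrow> perturbation_bound n c \<le> c / (2 * (exp 1)\<^sup>2 * real n)"
  unfolding perturbation_bound_def by (intro divide_right_mono) auto

lemma perturbation_bound_bigomega: "(\<lambda>n. perturbation_bound n c) \<in> \<Omega>(\<lambda>n. c / real n)"
proof -
  define m where "m = (if 0 < c then min 1 c else 1)"
  have m: "0 < m" unfolding m_def by auto
  have "(\<lambda>n. c / real n) \<in> O(\<lambda>n. perturbation_bound n c)"
  proof (rule bigoI)
    show "\<forall>\<^sub>F n in at_top. norm (c / real n) \<le> 2 * (exp 1)\<^sup>2 * \<bar>c\<bar> / m * norm (perturbation_bound n c)"
      using m by (intro always_eventually) (simp add: perturbation_bound_def m_def[symmetric] abs_mult)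
  qed
  then show ?thesis by (simp add: bigomega_iff_bigo)
qed

context
  fixes n :: nat and c h :: real
  assumes n: "1 \<le> n" and c: "0 \<le> c" and h: "0 \<le> h" "h \<le> perturbation_bound n c"
begin

lemma exp_one_add_le:
  assumes "T \<le> real (n - 1) * exp 1"
  shows "exp 1 + T \<le> exp 1 * real n"
proof -
  have "real (n - 1) = real n - 1" using n by (simp add: of_nat_diff)
  with assms show ?thesis by (simp add: algebra_simps)
qed

lemma perturbation_le_inverse:
  assumes "0 \<le> T" "T \<le> real (n - 1) * exp 1"
  shows "h \<le> 1 / (exp 1 + T)"
proof -
  have "0 < exp 1 + T"
    using assms(1) by (simp add: add_pos_nonneg)
  then have "1 / (exp 1 * real n) \<le> 1 / (exp 1 + T)"
    using exp_one_add_le[OF assms(2)] by (intro divide_left_mono) auto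
  then show ?thesis
    using h perturbation_bound_le_inverse[of n c] by linarith
qed

lemma perturbation_weight_le:
  assumes T: "real (n - 1) \<le> T" "T \<le> real (n - 1) * exp 1"
    and Q: "0 \<le> Q" "Q \<le> real (n - 1)"
  shows "h * (Q / (c * real (n - 1))) \<le> T / (exp 1 + T)\<^sup>2"
proof (cases "0 < c \<and> 2 \<le> n")
  case False
  then have "c * real (n - 1) = 0" using c n by auto
  moreover have "0 \<le> T" using T(1) by linarith
  ultimately show ?thesis by (simp only: div_by_0 mult_zero_right) simp
next
  case True
  then have cn: "0 < c" "2 \<le> n" by auto
  have n1: "real (n - 1) = real n - 1" using n by (simp add: of_nat_diff)
  have "Q / (c * real (n - 1)) \<le> real (n - 1) / (c * real (n - 1))"
    using Q cn by (intro divide_right_mono) auto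
  also have "\<dots> = 1 / c"
    using cn by simp
  finally have "h * (Q / (c * real (n - 1))) \<le> c / (2 * (exp 1)\<^sup>2 * real n) * (1 / c)"
    using h perturbation_bound_le_scaled[OF cn(1), of n] Q cn by (intro mult_mono) auto
  also have "\<dots> = (real n / 2) / (exp 1 * real n)\<^sup>2"
    using cn by (simp add: field_simps power2_eq_square)
  also have "\<dots> \<le> real (n - 1) / (exp 1 * real n)\<^sup>2"
    using cn n1 by (intro divide_right_mono) auto
  also have "\<dots> \<le> T / (exp 1 + T)\<^sup>2"
  proof (rule frac_le)
    have "0 < exp 1 + T" using T(1) by (simp add: add_pos_nonneg order_trans[OF of_nat_0_le_iff])
    then show "(exp 1 + T)\<^sup>2 \<le> (exp 1 * real n)\<^sup>2"
      using exp_one_add_le[OF T(2)] by (intro power_mono) auto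
    show "0 < (exp 1 + T)\<^sup>2" using \<open>0 < exp 1 + T\<close> by simp
  qed (use T in auto)
  finally show ?thesis .
qed

lemma pay_le_bid:
  assumes b: "b \<in> bids n" and i: "i < n"
  shows "pay n c h i b \<le> b i"
proof -
  define T where "T = (\<Sum>j\<in>{..<n}-{i}. exp (b j))"
  define q where "q = (\<Sum>j\<in>{..<n}-{i}. (b j)\<^sup>2) / (c * real (n - 1))"
  note bounds = bids_others_bounds[OF b i, folded T_def]
  have T: "0 \<le> T" using bounds(1) by linarith
  have "0 \<le> q" unfolding q_def using bounds(3) c by simp
  then have "0 \<le> ln ((exp (b i) + T) / (1 + T)) + 1/2 * h * (b i)\<^sup>2 * (q - 1)"
    using bids_others_bounds(5,6)[OF b i] perturbation_le_inverse[OF T bounds(2)] h T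
    by (intro soft_price_margin_nonneg) auto
  moreover have "0 \<le> (exp (b i) + T) / exp (b i)"
    using T by simp
  ultimately have "0 \<le> (exp (b i) + T) / exp (b i)
      * (ln ((exp (b i) + T) / (1 + T)) + 1/2 * h * (b i)\<^sup>2 * (q - 1))"
    by (rule mult_nonneg_nonneg[rotated])
  then show ?thesis
    unfolding alloc_pay_split(2)[OF i, where b = b and c = c and h = h, folded T_def q_def]
    by linarith
qed

lemma alloc_mult_pay_ge:
  assumes b: "b \<in> bids n" and i: "i < n"
  shows "h / 2 * (b i)\<^sup>2 \<le> alloc n i b * pay n c h i b"
proof -
  define T where "T = (\<Sum>j\<in>{..<n}-{i}. exp (b j))"
  define q where "q = (\<Sum>j\<in>{..<n}-{i}. (b j)\<^sup>2) / (c * real (n - 1))"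
  define L where "L = ln ((exp (b i) + T) / (1 + T))"
  note bounds = bids_others_bounds[OF b i, folded T_def]
  have T: "0 \<le> T" using bounds(1) by linarith
  have pos: "0 < exp (b i) + T" using T by (simp add: add_pos_nonneg)
  have "0 \<le> h * q" unfolding q_def using bounds(3) c h by simp
  moreover have "h * q \<le> T / (exp 1 + T)\<^sup>2"
    unfolding q_def using bounds by (intro perturbation_weight_le) auto
  ultimately have payment_bound: "h * q / 2 * (b i)\<^sup>2 \<le> b i * exp (b i) / (exp (b i) + T) - L"
    unfolding L_def using bids_others_bounds(5,6)[OF b i] T
    by (intro soft_payment_ge_quadratic) auto
  have "alloc n i b * pay n c h i b = exp (b i) / (exp (b i) + T)
      * (b i - (exp (b i) + T) / exp (b i) * (L + 1/2 * h * (b i)\<^sup>2 * (q - 1)))"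
    unfolding alloc_pay_split(1)[OF i, where b = b, folded T_def]
      alloc_pay_split(2)[OF i, where b = b and c = c and h = h, folded T_def q_def] L_def ..
  also have "\<dots> = b i * exp (b i) / (exp (b i) + T) - (L + 1/2 * h * (b i)\<^sup>2 * (q - 1))"
    using pos by (simp add: right_diff_distrib)
  finally have payment_eq: "alloc n i b * pay n c h i b
      = b i * exp (b i) / (exp (b i) + T) - (L + 1/2 * h * (b i)\<^sup>2 * (q - 1))" .
  moreover have "1/2 * h * (b i)\<^sup>2 * (q - 1) = h * q / 2 * (b i)\<^sup>2 - h / 2 * (b i)\<^sup>2"
    by (simp add: field_simps)
  ultimately show ?thesis using payment_bound by linarith
qed

lemma UIR_perturbed: "UIR n (alloc n) (pay n c h)"
  unfolding UIR_def using pay_le_bid by blast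

lemma BF_perturbed: "BF n (alloc n) (pay n c h) (revenue n c h)"
  unfolding BF_def
proof
  fix b assume b: "b \<in> bids n"
  have "revenue n c h b \<le> (\<Sum>i<n. h / 2 * (b i)\<^sup>2)"
    using revenue_le_quadratic[OF c h(1)] .
  also have "\<dots> \<le> (\<Sum>i<n. alloc n i b * pay n c h i b)"
    using alloc_mult_pay_ge[OF b] by (rule sum_mono) simp
  finally show "revenue n c h b \<le> (\<Sum>i<n. alloc n i b * pay n c h i b)" .
qed

end

lemma c_rho_nonneg: "(\<lambda>t. (\<rho> t)\<^sup>2) integrable_on {0..1} \<Longrightarrow> 0 \<le> c_rho \<rho>"
  unfolding c_rho_def by (rule integral_nonneg) auto

theorem theorem1:
  "\<exists>hstar :: nat \<Rightarrow> real \<Rightarrow> real.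
     (\<forall>n \<ge> 1. \<forall>\<rho>. pdf01 \<rho> \<and> (\<lambda>t. (\<rho> t)\<^sup>2) integrable_on {0..1} \<longrightarrow>
        hstar n (c_rho \<rho>) > 0 \<and>
        (\<forall>h \<in> {0..hstar n (c_rho \<rho>)}.
           UIR n (alloc n) (pay n (c_rho \<rho>) h) \<and>
           BF n (alloc n) (pay n (c_rho \<rho>) h) (revenue n (c_rho \<rho>) h)))
   \<and> (\<forall>\<rho>. pdf01 \<rho> \<and> (\<lambda>t. (\<rho> t)\<^sup>2) integrable_on {0..1} \<longrightarrow>
        (\<lambda>n. hstar n (c_rho \<rho>)) \<in> \<Omega>(\<lambda>n. c_rho \<rho> / real n))"
proof (intro exI[of _ perturbation_bound] conjI allI impI ballI)
  fix n :: nat and \<rho> :: "real \<Rightarrow> real" and h :: real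
  assume n: "1 \<le> n" and \<rho>: "pdf01 \<rho> \<and> (\<lambda>t. (\<rho> t)\<^sup>2) integrable_on {0..1}"
    and h: "h \<in> {0..perturbation_bound n (c_rho \<rho>)}"
  have c: "0 \<le> c_rho \<rho>" using \<rho> c_rho_nonneg by blast
  show "UIR n (alloc n) (pay n (c_rho \<rho>) h)"
    using UIR_perturbed[OF n c] h by simp
  show "BF n (alloc n) (pay n (c_rho \<rho>) h) (revenue n (c_rho \<rho>) h)"
    using BF_perturbed[OF n c] h by simp
next
  show "0 < perturbation_bound n (c_rho \<rho>)" if "1 \<le> n" for n and \<rho> :: "real \<Rightarrow> real"
    using that by (intro perturbation_bound_pos) simp
qed (rule perturbation_bound_bigomega)

end
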